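(* Let $A$ be a complete Noetherian local ring with maximal ideal $\mathfrak m$, $M$ a finitely generated $A$-module, $M_n=M\otimes_AA/\mathfrak m^n$, and $G_n=\operatorname{Aut}_A(M_n)$, with the natural reduction homomorphisms $G_{n+1}\to G_n$. Then the inverse system $(G_n)_{n\ge1}$ satisfies the Mittag-Leffler condition: for each $n\ge1$ there is $N\ge n$ such that the images of $G_i$ and $G_j$ in $G_n$ coincide for all $i,j\ge N$. *)

theory Defs
  imports Main "HOL.Modules"
begin

definition is_ideal :: "'a::comm_ring_1 set \<Rightarrow> bool" where
  "is_ideal I \<longleftrightarrow> 0 \<in> I \<and> (\<forall>x\<in>I. \<forall>y\<in>I. x + y \<in> I) \<and> (\<forall>r x. x \<in> I \<longrightarrow> r * x \<in> I)"

definition ideal_gen :: "'a::comm_ring_1 set \<Rightarrow> 'a set" where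
  "ideal_gen F = {(\<Sum>a\<in>t. r a * a) | t r. finite t \<and> t \<subseteq> F}"

definition maximal_ideal :: "'a::comm_ring_1 set \<Rightarrow> bool" where
  "maximal_ideal m \<longleftrightarrow> is_ideal m \<and> m \<noteq> UNIV \<and>
     (\<forall>I. is_ideal I \<and> m \<subseteq> I \<longrightarrow> I = m \<or> I = UNIV)"

definition local_ring_with :: "'a::comm_ring_1 set \<Rightarrow> bool" where
  "local_ring_with m \<longleftrightarrow> maximal_ideal m \<and> (\<forall>I. maximal_ideal I \<longrightarrow> I = m)"

definition noetherian_ring :: "'a::comm_ring_1 itself \<Rightarrow> bool" where
  "noetherian_ring _ \<longleftrightarrow> (\<forall>I::'a set. is_ideal I \<longrightarrow> (\<exists>F. finite F \<and> F \<subseteq> I \<and> ideal_gen F = I))"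

fun ideal_pow :: "'a::comm_ring_1 set \<Rightarrow> nat \<Rightarrow> 'a set" where
  "ideal_pow m 0 = UNIV"
| "ideal_pow m (Suc n) = ideal_gen {x * y | x y. x \<in> ideal_pow m n \<and> y \<in> m}"

definition adically_complete :: "'a::comm_ring_1 set \<Rightarrow> bool" where
  "adically_complete m \<longleftrightarrow>
     (\<Inter>n. ideal_pow m n) = {0} \<and>
     (\<forall>x::nat \<Rightarrow> 'a. (\<forall>k. \<exists>N. \<forall>i\<ge>N. \<forall>j\<ge>N. x i - x j \<in> ideal_pow m k)
        \<longrightarrow> (\<exists>y. \<forall>k. \<exists>N. \<forall>i\<ge>N. y - x i \<in> ideal_pow m k))"

(* submodule generated by F (literal unfolding of Modules.module.span) *)
definition submod_gen :: "('a::comm_ring_1 \<Rightarrow> 'b::ab_group_add \<Rightarrow> 'b) \<Rightarrow> 'b set \<Rightarrow> 'b set" where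
  "submod_gen s F = {(\<Sum>a\<in>t. s (r a) a) | t r. finite t \<and> t \<subseteq> F}"

definition fin_gen_module :: "('a::comm_ring_1 \<Rightarrow> 'b::ab_group_add \<Rightarrow> 'b) \<Rightarrow> bool" where
  "fin_gen_module s \<longleftrightarrow> (\<exists>F. finite F \<and> submod_gen s F = UNIV)"

definition IM :: "('a::comm_ring_1 \<Rightarrow> 'b::ab_group_add \<Rightarrow> 'b) \<Rightarrow> 'a set \<Rightarrow> nat \<Rightarrow> 'b set" where
  "IM s m n = submod_gen s {s a x | a x. a \<in> ideal_pow m n}"

(* coset x + m^n M, an element of M_n = M / m^n M  (= M \<otimes>_A A/m^n) *)
definition cos :: "('a::comm_ring_1 \<Rightarrow> 'b::ab_group_add \<Rightarrow> 'b) \<Rightarrow> 'a set \<Rightarrow> nat \<Rightarrow> 'b \<Rightarrow> 'b set" where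
  "cos s m n x = (\<lambda>y. x + y) ` IM s m n"

definition Mq :: "('a::comm_ring_1 \<Rightarrow> 'b::ab_group_add \<Rightarrow> 'b) \<Rightarrow> 'a set \<Rightarrow> nat \<Rightarrow> 'b set set" where
  "Mq s m n = range (cos s m n)"

(* G_n = Aut_A(M_n): A-linear bijections of M_n (extensional: {} outside M_n) *)
definition AutM :: "('a::comm_ring_1 \<Rightarrow> 'b::ab_group_add \<Rightarrow> 'b) \<Rightarrow> 'a set \<Rightarrow> nat \<Rightarrow> ('b set \<Rightarrow> 'b set) set" where
  "AutM s m n = {g. bij_betw g (Mq s m n) (Mq s m n) \<and>
     (\<forall>X. X \<notin> Mq s m n \<longrightarrow> g X = {}) \<and>
     (\<forall>x y. g (cos s m n (x + y)) = (\<lambda>(u,v). u + v) ` (g (cos s m n x) \<times> g (cos s m n y))) \<and>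
     (\<forall>a x z. g (cos s m n x) = cos s m n z \<longrightarrow> g (cos s m n (s a x)) = cos s m n (s a z))}"

(* image of G_i in G_n under the composite reduction map G_i \<rightarrow> G_n (i \<ge> n):
   h is the reduction of g iff h(x mod m^n M) = y mod m^n M whenever g(x mod m^i M) = y mod m^i M *)
definition red_image :: "('a::comm_ring_1 \<Rightarrow> 'b::ab_group_add \<Rightarrow> 'b) \<Rightarrow> 'a set \<Rightarrow> nat \<Rightarrow> nat \<Rightarrow> ('b set \<Rightarrow> 'b set) set" where
  "red_image s m i n = {h \<in> AutM s m n. \<exists>g \<in> AutM s m i.
      \<forall>x y. g (cos s m i x) = cos s m i y \<longrightarrow> h (cos s m n x) = cos s m n y}"

end

theory Submission
  imports Defs "HOL-Library.Function_Algebras" "HOL-Library.Set_Algebras"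
begin

text \<open>
  Let \<open>e\<^sub>1, \<dots>, e\<^sub>k\<close> generate \<open>M\<close>. An automorphism \<open>h\<close> of \<open>M\<^sub>n = M / m\<^sup>n M\<close> lies in the image
  of \<open>G\<^sub>i\<close> (\<open>i \<ge> n \<ge> 1\<close>) iff the values \<open>h(e\<^sub>j)\<close> lift to a tuple \<open>w\<close> such that \<open>e\<^sub>j \<mapsto> w\<^sub>j\<close>
  defines an endomorphism of \<open>M\<^sub>i\<close>: that endomorphism is surjective modulo \<open>m\<close>, hence surjective
  by Nakayama's lemma, hence bijective because \<open>M\<^sub>i\<close> has finite length (Fitting).
  So the image of \<open>G\<^sub>i\<close> in \<open>G\<^sub>n\<close> is determined by the submodule of \<open>M\<^sup>k\<close> of tuples congruent
  modulo \<open>m\<^sup>n M\<close> to such a \<open>w\<close>. These submodules decrease with \<open>i\<close> and contain \<open>m\<^sup>n M\<^sup>k\<close>;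
  as \<open>M\<^sup>k / m\<^sup>n M\<^sup>k\<close> has finite length they become stationary.
\<close>

section \<open>Ideals and their powers\<close>

lemma is_ideal_ideal_gen: "is_ideal (ideal_gen F)"
  unfolding is_ideal_def
proof (intro conjI ballI allI impI)
  show "0 \<in> ideal_gen F"
    unfolding ideal_gen_def by (auto intro!: exI[of _ "{}"])
next
  fix x y assume "x \<in> ideal_gen F" "y \<in> ideal_gen F"
  then obtain t1 r1 t2 r2 where h: "finite t1" "t1 \<subseteq> F" "finite t2" "t2 \<subseteq> F"
    "x = (\<Sum>a\<in>t1. r1 a * a)" "y = (\<Sum>a\<in>t2. r2 a * a)"
    unfolding ideal_gen_def by auto
  define r where "r a = (if a \<in> t1 then r1 a else 0) + (if a \<in> t2 then r2 a else 0)" for a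
  have "(\<Sum>a\<in>t1 \<union> t2. r a * a)
      = (\<Sum>a\<in>t1 \<union> t2. (if a \<in> t1 then r1 a * a else 0) + (if a \<in> t2 then r2 a * a else 0))"
    by (rule sum.cong) (auto simp: r_def algebra_simps)
  also have "\<dots> = (\<Sum>a\<in>t1 \<union> t2. if a \<in> t1 then r1 a * a else 0) + (\<Sum>a\<in>t1 \<union> t2. if a \<in> t2 then r2 a * a else 0)"
    by (rule sum.distrib)
  also have "\<dots> = x + y"
    using h by (simp add: sum.If_cases Int_absorb1)
  finally show "x + y \<in> ideal_gen F"
    unfolding ideal_gen_def using h by (auto intro!: exI[of _ "t1 \<union> t2"] exI[of _ r])
next
  fix c x assume "x \<in> ideal_gen F"
  then obtain t r where "finite t" "t \<subseteq> F" "x = (\<Sum>a\<in>t. r a * a)"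
    unfolding ideal_gen_def by auto
  then show "c * x \<in> ideal_gen F"
    unfolding ideal_gen_def
    by (auto intro!: exI[of _ t] exI[of _ "\<lambda>a. c * r a"] simp: sum_distrib_left mult.assoc)
qed

lemma ideal_gen_superset: "F \<subseteq> ideal_gen F"
proof
  fix x assume "x \<in> F"
  then show "x \<in> ideal_gen F" unfolding ideal_gen_def by (force intro!: exI[of _ "{x}"] exI[of _ "\<lambda>_. 1"])
qed

lemma ideal_gen_minimal:
  assumes "is_ideal I" "F \<subseteq> I"
  shows "ideal_gen F \<subseteq> I"
proof
  fix x assume "x \<in> ideal_gen F"
  then obtain t r where t: "finite t" "t \<subseteq> F" and x: "x = (\<Sum>a\<in>t. r a * a)"
    unfolding ideal_gen_def by auto
  from t have "(\<Sum>a\<in>t. r a * a) \<in> I"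
    by (induction t rule: finite_induct) (use assms in \<open>auto simp: is_ideal_def\<close>)
  then show "x \<in> I" using x by simp
qed

lemma is_ideal_ideal_pow: "is_ideal (ideal_pow m n)"
  by (cases n) (simp_all add: is_ideal_ideal_gen, simp add: is_ideal_def)

lemma ideal_pow_Suc_mult: "x \<in> ideal_pow m n \<Longrightarrow> y \<in> m \<Longrightarrow> x * y \<in> ideal_pow m (Suc n)"
  using ideal_gen_superset by fastforce

lemma ideal_pow_Suc_subset: "ideal_pow m (Suc n) \<subseteq> ideal_pow m n"
  unfolding ideal_pow.simps
  by (rule ideal_gen_minimal[OF is_ideal_ideal_pow])
    (use is_ideal_ideal_pow[of m n] in \<open>auto simp: is_ideal_def, metis mult.commute\<close>)

lemma ideal_pow_antimono: "n \<le> n' \<Longrightarrow> ideal_pow m n' \<subseteq> ideal_pow m n"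
  by (induction n' rule: dec_induct) (use ideal_pow_Suc_subset in auto)

lemma ideal_pow_one_subset: "is_ideal m \<Longrightarrow> ideal_pow m 1 \<subseteq> m"
  unfolding One_nat_def ideal_pow.simps by (rule ideal_gen_minimal) (auto simp: is_ideal_def)

lemma maximal_ideal_unit:
  assumes "maximal_ideal m" "a \<notin> m"
  obtains r \<mu> where "\<mu> \<in> m" "r * a + \<mu> = 1"
proof -
  let ?I = "{r * a + \<mu> | r \<mu>. \<mu> \<in> m}"
  have m: "is_ideal m" using assms(1) unfolding maximal_ideal_def by auto
  have "is_ideal ?I"
    unfolding is_ideal_def
  proof (intro conjI ballI allI impI)
    show "0 \<in> ?I" using m unfolding is_ideal_def by (auto intro!: exI[of _ 0])
  next
    fix x y assume "x \<in> ?I" "y \<in> ?I"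
    then obtain r1 u1 r2 u2 where "x = r1 * a + u1" "y = r2 * a + u2" "u1 \<in> m" "u2 \<in> m" by auto
    moreover from this have "x + y = (r1 + r2) * a + (u1 + u2)" "u1 + u2 \<in> m"
      using m by (auto simp: algebra_simps is_ideal_def)
    ultimately show "x + y \<in> ?I" by blast
  next
    fix c x assume "x \<in> ?I"
    then obtain r u where "x = r * a + u" "u \<in> m" by auto
    moreover from this have "c * x = (c * r) * a + c * u" "c * u \<in> m"
      using m by (auto simp: algebra_simps is_ideal_def)
    ultimately show "c * x \<in> ?I" by blast
  qed
  moreover have "m \<subseteq> ?I"
  proof
    fix x assume "x \<in> m"
    moreover have "x = 0 * a + x" by simp
    ultimately show "x \<in> ?I" by blast
  qed
  ultimately have "?I = m \<or> ?I = UNIV"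
    using assms(1) unfolding maximal_ideal_def by blast
  moreover have "a \<in> ?I"
  proof -
    have "a = 1 * a + 0" "0 \<in> m" using m unfolding is_ideal_def by simp_all
    then show ?thesis by blast
  qed
  ultimately have "?I = UNIV" using assms(2) by blast
  then have "1 \<in> ?I" by simp
  then show ?thesis using that by force
qed

section \<open>Chains of submodules\<close>

definition eventually_const :: "(nat \<Rightarrow> 'c) \<Rightarrow> bool" where
  "eventually_const U \<longleftrightarrow> (\<exists>N. \<forall>t\<ge>N. U t = U N)"

lemma mono_chain_comp:
  "mono \<phi> \<Longrightarrow> mono U \<or> antimono U \<Longrightarrow> mono (\<lambda>t. \<phi> (U t)) \<or> antimono (\<lambda>t. \<phi> (U t))"
  by (auto simp: mono_def antimono_def)

lemma eventually_const_two_valued: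
  fixes V :: "nat \<Rightarrow> 'c::order"
  assumes chain: "mono V \<or> antimono V" and two: "\<And>t. V t = A \<or> V t = B"
  shows "eventually_const V"
proof (cases "\<forall>t. V t = V 0")
  case True then show ?thesis unfolding eventually_const_def by auto
next
  case False
  then obtain t where t: "V t \<noteq> V 0" by auto
  have "V t' = V t" if "t \<le> t'" for t'
  proof -
    have "V 0 \<le> V t \<and> V t \<le> V t' \<or> V t \<le> V 0 \<and> V t' \<le> V t"
      using chain monoD[of V 0 t] antimonoD[of V 0 t] monoD[of V t t'] antimonoD[of V t t'] that
      by auto
    with t have "V t' \<noteq> V 0" by (metis order.antisym)
    then show ?thesis using t two[of t] two[of t'] two[of 0] by auto
  qed
  then show ?thesis unfolding eventually_const_def by blast
qed

lemma mono_inter_right: "mono (\<lambda>A. A \<inter> K)"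
  by (rule monoI) blast

lemma mono_set_plus_right: "mono (\<lambda>A. A + (K :: 'c::plus set))"
  by (rule monoI, rule set_plus_mono2) simp_all

lemma set_plus_upper_left: "0 \<in> B \<Longrightarrow> A \<subseteq> A + (B :: 'c::monoid_add set)"
  using set_plus_intro[of _ A 0 B] by (simp add: subset_iff)

lemma set_plus_upper_right: "0 \<in> A \<Longrightarrow> B \<subseteq> (A :: 'c::monoid_add set) + B"
  using set_plus_intro[of 0 A _ B] by (simp add: subset_iff)

context module
begin

lemma set_plus_subspaces:
  assumes "subspace A" "subspace B"
  shows "A + B = span (A \<union> B)"
proof -
  have "span A = A" "span B = B" using assms by simp_all
  then show ?thesis unfolding span_Un set_plus_def by blast
qed

lemma subspace_set_plus: "subspace A \<Longrightarrow> subspace B \<Longrightarrow> subspace (A + B)"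
  by (simp add: set_plus_subspaces)

lemma set_plus_subset:
  assumes "subspace C" "A \<subseteq> C" "B \<subseteq> C"
  shows "A + B \<subseteq> C"
proof
  fix x assume "x \<in> A + B"
  then obtain a b where "x = a + b" "a \<in> A" "b \<in> B" by (rule set_plus_elim)
  then show "x \<in> C" using assms subspace_add by (metis subsetD)
qed

lemma subspace_eq_modular:
  assumes "subspace A" "subspace B" "0 \<in> K" "A \<subseteq> B" "A \<inter> K = B \<inter> K" "A + K = B + K"
  shows "A = B"
proof
  show "B \<subseteq> A"
  proof
    fix x assume x: "x \<in> B"
    have "x \<in> A + K" using x set_plus_upper_left[OF assms(3), of B] assms(6) by (simp add: subset_iff)
    then obtain a c where ac: "x = a + c" "a \<in> A" "c \<in> K" by (rule set_plus_elim)
    then have "c \<in> B" using x assms(4) subspace_diff[OF assms(2), of x a] by auto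
    with ac assms(5) have "c \<in> A" by (metis Int_iff)
    with ac show "x \<in> A" using subspace_add[OF assms(1)] by simp
  qed
qed (rule assms(4))

lemma eventually_const_modular:
  assumes chain: "mono U \<or> antimono U" and sub: "\<And>t. subspace (U t)" and K: "0 \<in> K"
    and inter: "eventually_const (\<lambda>t. U t \<inter> K)" and plus: "eventually_const (\<lambda>t. U t + K)"
  shows "eventually_const U"
proof -
  obtain N1 where N1: "\<forall>t\<ge>N1. U t \<inter> K = U N1 \<inter> K" using inter unfolding eventually_const_def by auto
  obtain N2 where N2: "\<forall>t\<ge>N2. U t + K = U N2 + K" using plus unfolding eventually_const_def by auto
  have "U t = U (max N1 N2)" if "max N1 N2 \<le> t" for t
  proof -
    let ?N = "max N1 N2"
    have le: "N1 \<le> t" "N2 \<le> t" "N1 \<le> ?N" "N2 \<le> ?N" using that by auto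
    have inter_eq: "U ?N \<inter> K = U t \<inter> K" and plus_eq: "U ?N + K = U t + K"
      using N1[rule_format, OF le(1)] N1[rule_format, OF le(3)]
        N2[rule_format, OF le(2)] N2[rule_format, OF le(4)] by simp_all
    have "U ?N \<subseteq> U t \<or> U t \<subseteq> U ?N"
      using chain monoD[of U, OF _ that] antimonoD[of U, OF _ that] by blast
    then show ?thesis
    proof
      assume "U ?N \<subseteq> U t"
      then show ?thesis by (rule subspace_eq_modular[OF sub sub K _ inter_eq plus_eq, symmetric])
    next
      assume "U t \<subseteq> U ?N"
      then show ?thesis by (rule subspace_eq_modular[OF sub sub K _ inter_eq[symmetric] plus_eq[symmetric]])
    qed
  qed
  then show ?thesis unfolding eventually_const_def by blast
qed

definition ideal_span :: "'a set \<Rightarrow> 'b set \<Rightarrow> 'b set" where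
  "ideal_span I P = span {a *s x | a x. a \<in> I \<and> x \<in> P}"

lemma subspace_ideal_span: "subspace (ideal_span I P)"
  unfolding ideal_span_def by simp

lemma ideal_span_mem: "a \<in> I \<Longrightarrow> x \<in> P \<Longrightarrow> a *s x \<in> ideal_span I P"
  unfolding ideal_span_def by (rule span_base) blast

lemma ideal_span_subset: "subspace P \<Longrightarrow> ideal_span I P \<subseteq> P"
  unfolding ideal_span_def by (rule span_minimal) (auto intro: subspace_scale)

lemma ideal_span_UNIV: "subspace P \<Longrightarrow> ideal_span UNIV P = P"
  using ideal_span_subset ideal_span_mem[of 1 UNIV] by fastforce

lemma ideal_span_mono: "I \<subseteq> J \<Longrightarrow> ideal_span I P \<subseteq> ideal_span J P"
  unfolding ideal_span_def by (rule span_mono) blast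

lemma subspace_scale_preimage:
  assumes "subspace S" shows "subspace {x. a *s x \<in> S}"
proof (rule subspaceI)
  fix c x assume "x \<in> {x. a *s x \<in> S}"
  then have "c *s (a *s x) \<in> S" by (simp only: mem_Collect_eq subspace_scale[OF assms])
  then show "c *s x \<in> {x. a *s x \<in> S}" by (simp only: scale_left_commute mem_Collect_eq)
qed (use assms in \<open>auto simp: scale_right_distrib intro: subspace_0 subspace_add\<close>)

lemma ideal_span_pow_Suc:
  assumes "a \<in> m" "x \<in> ideal_span (ideal_pow m n) P"
  shows "a *s x \<in> ideal_span (ideal_pow m (Suc n)) P"
  using assms(2) unfolding ideal_span_def[of "ideal_pow m n"]
proof (induction rule: span_induct)
  case base
  show ?case by (rule subspace_scale_preimage[OF subspace_ideal_span])
next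
  case (step x)
  then obtain b y where "x = b *s y" "b \<in> ideal_pow m n" "y \<in> P" by blast
  moreover from this have "(b * a) *s y \<in> ideal_span (ideal_pow m (Suc n)) P"
    by (intro ideal_span_mem ideal_pow_Suc_mult assms(1))
  ultimately show ?case by (simp add: mult.commute)
qed

lemma ideal_span_finitely_generated:
  assumes "noetherian_ring TYPE('a)" "is_ideal I" "finite F"
  obtains G where "finite G" "G \<subseteq> ideal_span I (span F)" "ideal_span I (span F) \<subseteq> span G"
proof -
  obtain FI where FI: "finite FI" "FI \<subseteq> I" "ideal_gen FI = I"
    using assms(1,2) unfolding noetherian_ring_def by blast
  define G where "G = (\<lambda>(b, f). b *s f) ` (FI \<times> F)"
  have "finite G" unfolding G_def using FI(1) assms(3) by simp
  moreover have "G \<subseteq> ideal_span I (span F)"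
    unfolding G_def using FI(2) by (auto intro!: ideal_span_mem span_base)
  moreover have "ideal_span I (span F) \<subseteq> span G"
    unfolding ideal_span_def
  proof (rule span_minimal[OF _ subspace_span], safe)
    fix a x assume "a \<in> I" "x \<in> span F"
    have "b *s y \<in> span G" if "b \<in> FI" "y \<in> span F" for b y
      using that(2)
    proof (induction rule: span_induct)
      case base show ?case by (rule subspace_scale_preimage[OF subspace_span])
    next
      case (step f)
      then show ?case unfolding G_def using that(1) by (auto intro: span_base)
    qed
    moreover obtain t r where t: "t \<subseteq> FI" and a: "a = (\<Sum>c\<in>t. r c * c)"
      using \<open>a \<in> I\<close> FI(3) unfolding ideal_gen_def by blast
    ultimately have "(\<Sum>c\<in>t. r c *s (c *s x)) \<in> span G"
      using \<open>x \<in> span F\<close> by (intro span_sum) (blast intro: span_scale)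
    then show "a *s x \<in> span G" unfolding a by (simp add: scale_sum_left)
  qed
  ultimately show ?thesis using that by blast
qed

lemma intermediate_subspace_cases:
  assumes m: "maximal_ideal m" and C: "subspace C" and V: "subspace V"
    and ann: "\<forall>a\<in>m. \<forall>x\<in>C + span (insert g G). a *s x \<in> C"
    and lower: "C + span G \<subseteq> V" and upper: "V \<subseteq> C + span (insert g G)"
  shows "V = C + span G \<or> V = C + span (insert g G)"
proof (cases "V = C + span G")
  case False
  then obtain x where x: "x \<in> V" "x \<notin> C + span G" using lower by blast
  then obtain c y where cy: "x = c + y" "c \<in> C" "y \<in> span (insert g G)"
    using upper x(1) by (meson set_plus_elim subsetD)
  then obtain a where a: "y - a *s g \<in> span G" using span_insert by auto
  have rest: "c + (y - a *s g) \<in> C + span G" using cy(2) a by (rule set_plus_intro)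
  have C_low: "C \<subseteq> C + span G" by (rule set_plus_upper_left[OF span_zero])
  have g: "g \<in> C + span (insert g G)"
    using set_plus_upper_right[OF subspace_0[OF C]] span_base[of g "insert g G"] by blast
  have "a \<notin> m"
  proof
    assume "a \<in> m"
    then have "a *s g \<in> C + span G" using ann g C_low by blast
    then have "a *s g + (c + (y - a *s g)) \<in> C + span G"
      using rest subspace_add[OF subspace_set_plus[OF C subspace_span]] by blast
    with x cy show False by simp
  qed
  then obtain r \<mu> where r: "\<mu> \<in> m" "r * a + \<mu> = 1" using maximal_ideal_unit[OF m] by blast
  have "x - (c + (y - a *s g)) \<in> V" using x(1) rest lower by (intro subspace_diff[OF V]) auto
  moreover have "a *s g = x - (c + (y - a *s g))" using cy by simp
  ultimately have "a *s g \<in> V" by simp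
  moreover have "\<mu> *s g \<in> V" using ann g r(1) C_low lower by blast
  moreover have "g = r *s (a *s g) + \<mu> *s g"
    using r(2) by (metis scale_left_distrib scale_one scale_scale)
  ultimately have "g \<in> V" by (metis V subspace_add subspace_scale)
  moreover have "G \<subseteq> V" using lower set_plus_upper_right[OF subspace_0[OF C]] span_superset[of G] by blast
  ultimately have "span (insert g G) \<subseteq> V" by (intro span_minimal V) auto
  then have "C + span (insert g G) \<subseteq> V" using C_low lower by (intro set_plus_subset V) auto
  with upper show ?thesis by blast
qed simp

text \<open>Layer by layer: if \<open>m\<close> annihilates \<open>(C + span G)/C\<close>, a vector space of finite dimension over the
  residue field, every monotone chain of submodules between \<open>C\<close> and \<open>C + span G\<close> stabilises.\<close>

lemma eventually_const_chain_in_layer: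
  assumes m: "maximal_ideal m" and "finite G" and C: "subspace C"
    and ann: "\<forall>a\<in>m. \<forall>x\<in>C + span G. a *s x \<in> C"
    and chain: "mono U \<or> antimono U" and sub: "\<And>t. subspace (U t)"
    and bounds: "\<And>t. C \<subseteq> U t" "\<And>t. U t \<subseteq> C + span G"
  shows "eventually_const U"
  using \<open>finite G\<close> ann chain sub bounds
proof (induction G arbitrary: U rule: finite_induct)
  case empty
  then have "U t = C" for t by (simp add: order.antisym)
  then show ?case unfolding eventually_const_def by auto
next
  case (insert g G U)
  define D where "D = C + span G"
  have D: "subspace D" unfolding D_def by (rule subspace_set_plus[OF C subspace_span])
  have D_bound: "C \<subseteq> D" "D \<subseteq> C + span (insert g G)"
    unfolding D_def by (rule set_plus_upper_left[OF span_zero], rule set_plus_mono2)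
      (use span_mono[of G "insert g G"] in auto)
  have "eventually_const (\<lambda>t. U t \<inter> D)"
    using insert.prems D_bound by (intro insert.IH[unfolded D_def[symmetric]]
        mono_chain_comp[OF mono_inter_right] subspace_inter D) auto
  moreover have "eventually_const (\<lambda>t. U t + D)"
  proof (rule eventually_const_two_valued[OF mono_chain_comp[OF mono_set_plus_right insert.prems(2)]])
    fix t
    have "D \<subseteq> U t + D" by (rule set_plus_upper_right[OF subspace_0[OF insert.prems(3)]])
    moreover have "U t + D \<subseteq> C + span (insert g G)"
      by (rule set_plus_subset[OF subspace_set_plus[OF C subspace_span] insert.prems(5) D_bound(2)])
    ultimately show "U t + D = D \<or> U t + D = C + span (insert g G)"
      unfolding D_def
      by (intro intermediate_subspace_cases[OF m C _ insert.prems(1)] subspace_set_plus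
          insert.prems(3) D[unfolded D_def])
  qed
  ultimately show ?case
    using eventually_const_modular[OF insert.prems(2,3) subspace_0[OF D]] by blast
qed

lemma eventually_const_chain_above_ideal_power:
  assumes m: "maximal_ideal m" and noeth: "noetherian_ring TYPE('a)" and "finite F"
    and chain: "mono U \<or> antimono U" and sub: "\<And>t. subspace (U t)"
    and bounds: "\<And>t. ideal_span (ideal_pow m n) (span F) \<subseteq> U t" "\<And>t. U t \<subseteq> span F"
  shows "eventually_const U"
  using chain sub bounds
proof (induction n arbitrary: U)
  case 0
  then have "U t = span F" for t
    using ideal_span_UNIV[OF subspace_span, of F] by (metis ideal_pow.simps(1) order.antisym)
  then show ?case unfolding eventually_const_def by auto
next
  case (Suc n U)
  define K where "K = ideal_span (ideal_pow m n) (span F)"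
  define C where "C = ideal_span (ideal_pow m (Suc n)) (span F)"
  have K: "subspace K" "K \<subseteq> span F"
    unfolding K_def by (simp_all add: subspace_ideal_span ideal_span_subset)
  have C: "subspace C" "C \<subseteq> K"
    unfolding C_def K_def by (simp_all only: subspace_ideal_span ideal_span_mono[OF ideal_pow_Suc_subset])
  obtain G where G: "finite G" "G \<subseteq> K" "K \<subseteq> span G"
    using ideal_span_finitely_generated[OF noeth is_ideal_ideal_pow \<open>finite F\<close>] unfolding K_def by blast
  have K_eq: "K = C + span G"
    using G C K set_plus_upper_right[OF subspace_0[OF C(1)]] span_minimal[OF G(2) K(1)]
    by (intro order.antisym set_plus_subset) auto
  have ann: "\<forall>a\<in>m. \<forall>x\<in>C + span G. a *s x \<in> C"
    unfolding K_eq[symmetric] unfolding K_def C_def by (blast intro: ideal_span_pow_Suc)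
  have "eventually_const (\<lambda>t. U t \<inter> K)"
  proof (rule eventually_const_chain_in_layer[OF m G(1) C(1) ann
        mono_chain_comp[OF mono_inter_right Suc.prems(1)]])
    fix t
    show "subspace (U t \<inter> K)" using Suc.prems(2) K(1) by (rule subspace_inter)
    show "C \<subseteq> U t \<inter> K" using Suc.prems(3)[of t] C(2) unfolding C_def by blast
    show "U t \<inter> K \<subseteq> C + span G" using K_eq by blast
  qed
  moreover have "eventually_const (\<lambda>t. U t + K)"
  proof (rule Suc.IH[OF mono_chain_comp[OF mono_set_plus_right Suc.prems(1)]])
    fix t
    show "subspace (U t + K)" by (rule subspace_set_plus[OF Suc.prems(2) K(1)])
    show "ideal_span (ideal_pow m n) (span F) \<subseteq> U t + K"
      unfolding K_def[symmetric] by (rule set_plus_upper_right[OF subspace_0[OF Suc.prems(2)]])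
    show "U t + K \<subseteq> span F" by (rule set_plus_subset[OF subspace_span Suc.prems(4) K(2)])
  qed
  ultimately show ?case
    using eventually_const_modular[OF Suc.prems(1,2) subspace_0[OF K(1)]] by blast
qed

end

lemma sum_fun_apply: "(\<Sum>x\<in>A. f x) i = (\<Sum>x\<in>A. f x i)"
  by (induction A rule: infinite_finite_induct) auto

locale noetherian_fg_module = module +
  fixes m :: "'a set" and k :: nat and e :: "nat \<Rightarrow> 'b"
  assumes span_generators: "span (e ` {..<k}) = UNIV"
    and maximal: "maximal_ideal m"
    and noetherian: "noetherian_ring TYPE('a)"
begin

lemma is_ideal_m: "is_ideal m"
  using maximal unfolding maximal_ideal_def by simp

abbreviation powM :: "nat \<Rightarrow> 'b set" where "powM i \<equiv> IM scale m i"

abbreviation coset :: "nat \<Rightarrow> 'b \<Rightarrow> 'b set" where "coset i x \<equiv> cos scale m i x"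

lemma powM_eq_ideal_span: "powM i = ideal_span (ideal_pow m i) UNIV"
  unfolding IM_def submod_gen_def ideal_span_def span_explicit by simp

lemma subspace_powM: "subspace (powM i)"
  unfolding powM_eq_ideal_span by (rule subspace_ideal_span)

lemmas powM_zero = subspace_0[OF subspace_powM]
  and powM_add = subspace_add[OF subspace_powM]
  and powM_diff = subspace_diff[OF subspace_powM]
  and powM_neg = subspace_neg[OF subspace_powM]
  and powM_scale = subspace_scale[OF subspace_powM]

lemma powM_diff_commute: "x - y \<in> powM i \<Longrightarrow> y - x \<in> powM i"
  using powM_neg by (metis minus_diff_eq)

lemma powM_0: "powM 0 = UNIV"
  unfolding powM_eq_ideal_span by (simp add: ideal_span_UNIV)

lemma powM_antimono: "i \<le> j \<Longrightarrow> powM j \<subseteq> powM i"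
  unfolding powM_eq_ideal_span by (rule ideal_span_mono[OF ideal_pow_antimono])

lemma scale_mem_powM: "a \<in> ideal_pow m i \<Longrightarrow> a *s x \<in> powM i"
  unfolding powM_eq_ideal_span by (rule ideal_span_mem) simp_all

lemma scale_powM_one:
  assumes "a \<in> ideal_pow m t" "x \<in> powM 1"
  shows "a *s x \<in> powM (Suc t)"
  using assms(2) unfolding powM_eq_ideal_span ideal_span_def[of "ideal_pow m 1"]
proof (induction rule: span_induct)
  case base
  show ?case by (rule subspace_scale_preimage[OF subspace_ideal_span])
next
  case (step z)
  then obtain b y where "z = b *s y" "b \<in> ideal_pow m 1" by blast
  moreover from this have "b \<in> m" using ideal_pow_one_subset[OF is_ideal_m] by blast
  then have "(a * b) *s y \<in> ideal_span (ideal_pow m (Suc t)) UNIV"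
    by (intro ideal_span_mem ideal_pow_Suc_mult[OF assms(1)]) simp_all
  ultimately show ?case by simp
qed

lemma coset_mem_iff: "z \<in> coset i x \<longleftrightarrow> z - x \<in> powM i"
proof
  assume "z \<in> coset i x"
  then obtain \<mu> where "\<mu> \<in> powM i" "z = x + \<mu>" unfolding cos_def by blast
  then show "z - x \<in> powM i" by simp
next
  assume "z - x \<in> powM i"
  moreover have "z = x + (z - x)" by simp
  ultimately show "z \<in> coset i x" unfolding cos_def by blast
qed

lemma coset_eq_iff: "coset i x = coset i y \<longleftrightarrow> x - y \<in> powM i"
proof
  assume "coset i x = coset i y"
  moreover have "x \<in> coset i x" by (simp add: coset_mem_iff powM_zero)
  ultimately show "x - y \<in> powM i" by (simp add: coset_mem_iff)
next
  assume d: "x - y \<in> powM i"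
  have "z - x \<in> powM i \<longleftrightarrow> z - y \<in> powM i" for z
  proof -
    have "z - y = (z - x) + (x - y)" "z - x = (z - y) - (x - y)" by simp_all
    then show ?thesis using powM_add[OF _ d] powM_diff[OF _ d] by metis
  qed
  then show "coset i x = coset i y" by (auto simp: coset_mem_iff)
qed

lemma coset_add: "(\<lambda>(u, v). u + v) ` (coset i x \<times> coset i y) = coset i (x + y)"
proof
  show "(\<lambda>(u, v). u + v) ` (coset i x \<times> coset i y) \<subseteq> coset i (x + y)"
  proof clarify
    fix u v assume "u \<in> coset i x" "v \<in> coset i y"
    then have "(u - x) + (v - y) \<in> powM i" by (simp add: coset_mem_iff powM_add)
    then show "u + v \<in> coset i (x + y)" by (simp add: coset_mem_iff algebra_simps)
  qed
next
  show "coset i (x + y) \<subseteq> (\<lambda>(u, v). u + v) ` (coset i x \<times> coset i y)"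
  proof
    fix z assume "z \<in> coset i (x + y)"
    then have "(z - y, y) \<in> coset i x \<times> coset i y"
      by (simp add: coset_mem_iff powM_zero algebra_simps)
    then show "z \<in> (\<lambda>(u, v). u + v) ` (coset i x \<times> coset i y)" by force
  qed
qed

definition lincomb :: "(nat \<Rightarrow> 'a) \<Rightarrow> (nat \<Rightarrow> 'b) \<Rightarrow> 'b" where
  "lincomb r w = (\<Sum>j<k. r j *s w j)"

lemma lincomb_add_coeffs: "lincomb (\<lambda>j. r j + r' j) w = lincomb r w + lincomb r' w"
  unfolding lincomb_def by (simp add: scale_left_distrib sum.distrib)

lemma lincomb_diff_coeffs: "lincomb (\<lambda>j. r j - r' j) w = lincomb r w - lincomb r' w"
  unfolding lincomb_def by (simp add: scale_left_diff_distrib sum_subtractf)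

lemma lincomb_scale_coeffs: "lincomb (\<lambda>j. a * r j) w = a *s lincomb r w"
  unfolding lincomb_def by (simp add: scale_sum_right)

lemma lincomb_add_vectors: "lincomb r (\<lambda>j. w j + w' j) = lincomb r w + lincomb r w'"
  unfolding lincomb_def by (simp add: scale_right_distrib sum.distrib)

lemma lincomb_scale_vectors: "lincomb r (\<lambda>j. c *s w j) = c *s lincomb r w"
  unfolding lincomb_def by (simp add: scale_sum_right mult.commute)

lemma lincomb_zero_vectors: "lincomb r (\<lambda>j. 0) = 0"
  unfolding lincomb_def by simp

lemma lincomb_delta:
  assumes "j < k" shows "lincomb (\<lambda>l. if l = j then 1 else 0) w = w j"
proof -
  have "lincomb (\<lambda>l. if l = j then 1 else 0) w = (\<Sum>l<k. if l = j then w l else 0)"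
    unfolding lincomb_def by (rule sum.cong) auto
  also have "\<dots> = w j" using assms by (simp add: sum.delta)
  finally show ?thesis .
qed

lemma ex_lincomb_generators: "\<exists>r. x = lincomb r e"
proof -
  have "subspace (range (\<lambda>r. lincomb r e))"
  proof (rule subspaceI)
    show "0 \<in> range (\<lambda>r. lincomb r e)"
      using lincomb_scale_coeffs[of 0] by (metis rangeI scale_zero_left)
  qed (auto simp flip: lincomb_add_coeffs lincomb_scale_coeffs)
  moreover have "e ` {..<k} \<subseteq> range (\<lambda>r. lincomb r e)"
  proof (rule image_subsetI)
    fix j assume "j \<in> {..<k}"
    then show "e j \<in> range (\<lambda>r. lincomb r e)" using lincomb_delta[of j e] by (metis lessThan_iff rangeI)
  qed
  ultimately have "span (e ` {..<k}) \<subseteq> range (\<lambda>r. lincomb r e)" by (rule span_minimal[rotated])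
  then show ?thesis using span_generators by auto
qed

definition coords :: "'b \<Rightarrow> nat \<Rightarrow> 'a" where
  "coords x = (SOME r. x = lincomb r e)"

lemma lincomb_coords: "lincomb (coords x) e = x"
  unfolding coords_def using someI_ex[OF ex_lincomb_generators] by metis

section \<open>Maps that are linear modulo \<open>m\<^sup>i M\<close>\<close>

definition linear_mod :: "nat \<Rightarrow> ('b \<Rightarrow> 'b) \<Rightarrow> bool" where
  "linear_mod i \<phi> \<longleftrightarrow>
    (\<forall>x y. \<phi> (x + y) - \<phi> x - \<phi> y \<in> powM i) \<and> (\<forall>a x. \<phi> (a *s x) - a *s \<phi> x \<in> powM i)"

definition surj_mod :: "nat \<Rightarrow> ('b \<Rightarrow> 'b) \<Rightarrow> bool" where
  "surj_mod i \<phi> \<longleftrightarrow> (\<forall>y. \<exists>x. \<phi> x - y \<in> powM i)"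

lemma linear_mod_add: "linear_mod i \<phi> \<Longrightarrow> \<phi> (x + y) - \<phi> x - \<phi> y \<in> powM i"
  unfolding linear_mod_def by blast

lemma linear_mod_scale: "linear_mod i \<phi> \<Longrightarrow> \<phi> (a *s x) - a *s \<phi> x \<in> powM i"
  unfolding linear_mod_def by blast

lemma linear_mod_antimono: "linear_mod j \<phi> \<Longrightarrow> i \<le> j \<Longrightarrow> linear_mod i \<phi>"
  unfolding linear_mod_def using powM_antimono by blast

lemma linear_mod_zero: "linear_mod i \<phi> \<Longrightarrow> \<phi> 0 \<in> powM i"
  using linear_mod_scale[of i \<phi> 0 0] by simp

lemma subspace_linear_mod_preimage:
  assumes "linear_mod i \<phi>"
  shows "subspace {x. \<phi> x \<in> powM i}"
proof (rule subspaceI)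
  fix x y assume "x \<in> {x. \<phi> x \<in> powM i}" "y \<in> {x. \<phi> x \<in> powM i}"
  then have "(\<phi> (x + y) - \<phi> x - \<phi> y) + (\<phi> x + \<phi> y) \<in> powM i"
    by (intro powM_add linear_mod_add[OF assms(1)]) simp_all
  then show "x + y \<in> {x. \<phi> x \<in> powM i}" by simp
next
  fix c x assume "x \<in> {x. \<phi> x \<in> powM i}"
  then have "(\<phi> (c *s x) - c *s \<phi> x) + c *s \<phi> x \<in> powM i"
    by (intro powM_add powM_scale linear_mod_scale[OF assms(1)]) simp
  then show "c *s x \<in> {x. \<phi> x \<in> powM i}" by simp
qed (simp add: linear_mod_zero[OF assms])

text \<open>A map that is linear modulo \<open>m\<^sup>i M\<close> automatically preserves \<open>m\<^sup>i M\<close>,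
  since \<open>\<phi> (a *s x) \<equiv> a *s \<phi> x\<close>.\<close>

lemma linear_mod_powM:
  assumes \<phi>: "linear_mod i \<phi>" and x: "x \<in> powM i"
  shows "\<phi> x \<in> powM i"
proof -
  have "subspace {x. \<phi> x \<in> powM i}" by (rule subspace_linear_mod_preimage[OF \<phi>])
  moreover have "{a *s y | a y. a \<in> ideal_pow m i \<and> y \<in> UNIV} \<subseteq> {x. \<phi> x \<in> powM i}"
  proof clarify
    fix a y assume "a \<in> ideal_pow m i"
    then have "(\<phi> (a *s y) - a *s \<phi> y) + a *s \<phi> y \<in> powM i"
      by (intro powM_add linear_mod_scale[OF \<phi>] scale_mem_powM)
    then show "\<phi> (a *s y) \<in> powM i" by simp
  qed
  ultimately show ?thesis
    using x span_minimal unfolding powM_eq_ideal_span ideal_span_def by blast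
qed

lemma linear_mod_cong:
  assumes \<phi>: "linear_mod i \<phi>" and d: "x - x' \<in> powM i"
  shows "\<phi> x - \<phi> x' \<in> powM i"
proof -
  have "(\<phi> ((x - x') + x') - \<phi> (x - x') - \<phi> x') + \<phi> (x - x') \<in> powM i"
    by (intro powM_add linear_mod_add[OF \<phi>] linear_mod_powM[OF \<phi> d])
  then show ?thesis by simp
qed

lemma linear_mod_diff:
  assumes \<phi>: "linear_mod i \<phi>"
  shows "\<phi> (x - y) - (\<phi> x - \<phi> y) \<in> powM i"
proof -
  have "- (\<phi> ((x - y) + y) - \<phi> (x - y) - \<phi> y) \<in> powM i"
    by (intro powM_neg linear_mod_add[OF \<phi>])
  then show ?thesis by (simp add: algebra_simps)
qed

lemma linear_mod_comp:
  assumes \<phi>: "linear_mod i \<phi>" and \<psi>: "linear_mod i \<psi>"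
  shows "linear_mod i (\<phi> \<circ> \<psi>)"
  unfolding linear_mod_def comp_def
proof safe
  fix x y
  have "(\<phi> (\<psi> (x + y)) - \<phi> (\<psi> x + \<psi> y)) + (\<phi> (\<psi> x + \<psi> y) - \<phi> (\<psi> x) - \<phi> (\<psi> y)) \<in> powM i"
    using linear_mod_add[OF \<psi>, of x y]
    by (intro powM_add linear_mod_cong[OF \<phi>] linear_mod_add[OF \<phi>]) (simp add: algebra_simps)
  then show "\<phi> (\<psi> (x + y)) - \<phi> (\<psi> x) - \<phi> (\<psi> y) \<in> powM i" by (simp add: algebra_simps)
next
  fix a x
  have "(\<phi> (\<psi> (a *s x)) - \<phi> (a *s \<psi> x)) + (\<phi> (a *s \<psi> x) - a *s \<phi> (\<psi> x)) \<in> powM i"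
    by (intro powM_add linear_mod_cong[OF \<phi> linear_mod_scale[OF \<psi>]] linear_mod_scale[OF \<phi>])
  then show "\<phi> (\<psi> (a *s x)) - a *s \<phi> (\<psi> x) \<in> powM i" by simp
qed

lemma linear_mod_funpow: "linear_mod i \<phi> \<Longrightarrow> linear_mod i (\<phi> ^^ t)"
proof (induction t)
  case 0 then show ?case by (simp add: linear_mod_def powM_zero)
next
  case (Suc t)
  show ?case unfolding funpow.simps(2) by (rule linear_mod_comp[OF Suc.prems Suc.IH[OF Suc.prems]])
qed

lemma surj_mod_funpow:
  assumes \<phi>: "linear_mod i \<phi>" and surj: "surj_mod i \<phi>"
  shows "surj_mod i (\<phi> ^^ t)"
  unfolding surj_mod_def
proof (induction t)
  case 0 show ?case using powM_zero by (metis diff_self funpow_0)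
next
  case (Suc t)
  show ?case
  proof
    fix y
    obtain x where x: "\<phi> x - y \<in> powM i" using surj unfolding surj_mod_def by blast
    obtain z where "(\<phi> ^^ t) z - x \<in> powM i" using Suc.IH by blast
    then have "(\<phi> ((\<phi> ^^ t) z) - \<phi> x) + (\<phi> x - y) \<in> powM i"
      by (intro powM_add linear_mod_cong[OF \<phi>] x)
    then show "\<exists>z. (\<phi> ^^ Suc t) z - y \<in> powM i" by auto
  qed
qed

lemma set_plus_powM_eq_UNIV:
  assumes V: "subspace V" and one: "V + powM 1 = UNIV"
  shows "V + powM t = UNIV"
proof (induction t)
  case 0
  show ?case using set_plus_upper_right[OF subspace_0[OF V]] by (auto simp: powM_0)
next
  case (Suc t)
  have W: "subspace (V + powM (Suc t))" by (rule subspace_set_plus[OF V subspace_powM])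
  have "{a *s z | a z. a \<in> ideal_pow m t \<and> z \<in> UNIV} \<subseteq> V + powM (Suc t)"
  proof clarify
    fix a z assume a: "a \<in> ideal_pow m t"
    obtain v \<mu> where "z = v + \<mu>" "v \<in> V" "\<mu> \<in> powM 1"
      using one by (metis UNIV_I set_plus_elim)
    moreover from this have "a *s v + a *s \<mu> \<in> V + powM (Suc t)"
      by (intro set_plus_intro subspace_scale[OF V] scale_powM_one[OF a])
    ultimately show "a *s z \<in> V + powM (Suc t)" by (simp add: scale_right_distrib)
  qed
  then have "powM t \<subseteq> V + powM (Suc t)"
    unfolding powM_eq_ideal_span[of t] ideal_span_def by (rule span_minimal[OF _ W])
  moreover have "V \<subseteq> V + powM (Suc t)" by (rule set_plus_upper_left[OF powM_zero])
  ultimately have "V + powM t \<subseteq> V + powM (Suc t)" by (rule set_plus_subset[OF W, rotated])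
  then show ?case using Suc.IH by blast
qed

lemma subspace_image_mod:
  assumes \<phi>: "linear_mod i \<phi>"
  shows "subspace {z. \<exists>x. \<phi> x - z \<in> powM i}"
proof (rule subspaceI)
  show "0 \<in> {z. \<exists>x. \<phi> x - z \<in> powM i}" using linear_mod_zero[OF \<phi>] by auto
next
  fix z z' assume "z \<in> {z. \<exists>x. \<phi> x - z \<in> powM i}" "z' \<in> {z. \<exists>x. \<phi> x - z \<in> powM i}"
  then obtain x x' where "\<phi> x - z \<in> powM i" "\<phi> x' - z' \<in> powM i" by blast
  then have "(\<phi> (x + x') - \<phi> x - \<phi> x') + (\<phi> x - z) + (\<phi> x' - z') \<in> powM i"
    by (intro powM_add linear_mod_add[OF \<phi>])
  then show "z + z' \<in> {z. \<exists>x. \<phi> x - z \<in> powM i}" by (auto simp: algebra_simps)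
next
  fix c z assume "z \<in> {z. \<exists>x. \<phi> x - z \<in> powM i}"
  then obtain x where "\<phi> x - z \<in> powM i" by blast
  then have "(\<phi> (c *s x) - c *s \<phi> x) + c *s (\<phi> x - z) \<in> powM i"
    by (intro powM_add powM_scale linear_mod_scale[OF \<phi>])
  then show "c *s z \<in> {z. \<exists>x. \<phi> x - z \<in> powM i}" by (auto simp: algebra_simps)
qed

lemma surj_mod_from_one:
  assumes \<phi>: "linear_mod i \<phi>" and surj: "surj_mod 1 \<phi>"
  shows "surj_mod i \<phi>"
proof -
  define V where "V = {z. \<exists>x. \<phi> x - z \<in> powM i}"
  have "subspace V" unfolding V_def by (rule subspace_image_mod[OF \<phi>])
  moreover have "V + powM 1 = UNIV"
  proof -
    have "y \<in> V + powM 1" for y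
    proof -
      obtain x where "\<phi> x - y \<in> powM 1" using surj unfolding surj_mod_def by blast
      then have "- (\<phi> x - y) \<in> powM 1" by (rule powM_neg)
      moreover have "\<phi> x \<in> V" unfolding V_def using powM_zero[of i] by (metis diff_self mem_Collect_eq)
      ultimately have "\<phi> x + - (\<phi> x - y) \<in> V + powM 1" by (intro set_plus_intro)
      then show ?thesis by simp
    qed
    then show ?thesis by blast
  qed
  ultimately have "V + powM i = UNIV" by (rule set_plus_powM_eq_UNIV)
  show ?thesis
    unfolding surj_mod_def
  proof
    fix y
    obtain v \<mu> where "y = v + \<mu>" "v \<in> V" "\<mu> \<in> powM i"
      using \<open>V + powM i = UNIV\<close> by (metis UNIV_I set_plus_elim)
    moreover from this obtain x where "\<phi> x - v \<in> powM i" unfolding V_def by blast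
    ultimately have "(\<phi> x - v) - \<mu> \<in> powM i" by (simp add: powM_diff)
    then show "\<exists>x. \<phi> x - y \<in> powM i" using \<open>y = v + \<mu>\<close> by (auto simp: algebra_simps)
  qed
qed

text \<open>Fitting's argument: the kernels of the iterates of \<open>\<phi>\<close> modulo \<open>m\<^sup>i M\<close> form an increasing chain
  of submodules between \<open>m\<^sup>i M\<close> and \<open>M\<close>; once it stabilises at \<open>N\<close>, surjectivity of \<open>\<phi>\<^sup>N\<close> shows that
  \<open>\<phi>\<close> is injective modulo \<open>m\<^sup>i M\<close>.\<close>

lemma surj_mod_imp_inj_mod:
  assumes \<phi>: "linear_mod i \<phi>" and surj: "surj_mod i \<phi>" and x: "\<phi> x \<in> powM i"
  shows "x \<in> powM i"
proof -
  define K where "K t = {x. (\<phi> ^^ t) x \<in> powM i}" for t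
  have "mono K"
    unfolding mono_iff_le_Suc K_def using linear_mod_powM[OF \<phi>] by auto
  moreover have "subspace (K t)" for t
    unfolding K_def by (rule subspace_linear_mod_preimage[OF linear_mod_funpow[OF \<phi>]])
  moreover have "ideal_span (ideal_pow m i) (span (e ` {..<k})) \<subseteq> K t" for t
    unfolding K_def span_generators powM_eq_ideal_span[symmetric]
    using linear_mod_powM[OF linear_mod_funpow[OF \<phi>]] by blast
  ultimately have "eventually_const K"
    by (intro eventually_const_chain_above_ideal_power[OF maximal noetherian
          finite_imageI[of "{..<k}" e, OF finite_lessThan], where U = K and n = i])
      (auto simp: span_generators)
  then obtain N where N: "K (Suc N) = K N" unfolding eventually_const_def by (metis le_SucI order_refl)
  obtain z where z: "(\<phi> ^^ N) z - x \<in> powM i"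
    using surj_mod_funpow[OF \<phi> surj] unfolding surj_mod_def by blast
  have "(\<phi> ((\<phi> ^^ N) z) - \<phi> x) + \<phi> x \<in> powM i"
    by (intro powM_add linear_mod_cong[OF \<phi> z] x)
  then have "z \<in> K N" using N unfolding K_def by auto
  then show ?thesis
    unfolding K_def using z powM_diff[of "(\<phi> ^^ N) z" i "(\<phi> ^^ N) z - x"] by simp
qed

section \<open>Automorphisms of \<open>M / m\<^sup>i M\<close> and their reductions\<close>

text \<open>\<open>hom_tuples i\<close> consists of the tuples \<open>w\<close> for which \<open>e j \<mapsto> w j\<close> extends to an endomorphism of
  \<open>M / m\<^sup>i M\<close>: every relation among the generators modulo \<open>m\<^sup>i M\<close> must also hold among the \<open>w j\<close>.\<close>

definition hom_tuples :: "nat \<Rightarrow> (nat \<Rightarrow> 'b) set" where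
  "hom_tuples i = {w. \<forall>r. lincomb r e \<in> powM i \<longrightarrow> lincomb r w \<in> powM i}"

definition tuple_map :: "(nat \<Rightarrow> 'b) \<Rightarrow> 'b \<Rightarrow> 'b" where
  "tuple_map w x = lincomb (coords x) w"

lemma hom_tuplesD: "w \<in> hom_tuples i \<Longrightarrow> lincomb r e \<in> powM i \<Longrightarrow> lincomb r w \<in> powM i"
  unfolding hom_tuples_def by blast

lemma hom_tuples_zero: "(\<lambda>j. 0) \<in> hom_tuples i"
  unfolding hom_tuples_def by (simp add: lincomb_zero_vectors powM_zero)

lemma hom_tuples_add: "w \<in> hom_tuples i \<Longrightarrow> w' \<in> hom_tuples i \<Longrightarrow> (\<lambda>j. w j + w' j) \<in> hom_tuples i"
  unfolding hom_tuples_def by (simp add: lincomb_add_vectors powM_add)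

lemma hom_tuples_scale: "w \<in> hom_tuples i \<Longrightarrow> (\<lambda>j. c *s w j) \<in> hom_tuples i"
  unfolding hom_tuples_def by (simp add: lincomb_scale_vectors powM_scale)

lemma tuple_map_lincomb:
  assumes "w \<in> hom_tuples i"
  shows "tuple_map w (lincomb r e) - lincomb r w \<in> powM i"
proof -
  have "lincomb (\<lambda>j. coords (lincomb r e) j - r j) w \<in> powM i"
    by (rule hom_tuplesD[OF assms]) (simp add: lincomb_diff_coeffs lincomb_coords powM_zero)
  then show ?thesis unfolding tuple_map_def lincomb_diff_coeffs .
qed

lemma linear_mod_tuple_map:
  assumes w: "w \<in> hom_tuples i"
  shows "linear_mod i (tuple_map w)"
  unfolding linear_mod_def
proof safe
  fix x y
  let ?r = "\<lambda>j. coords (x + y) j - coords x j - coords y j"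
  have "lincomb ?r w \<in> powM i"
    by (rule hom_tuplesD[OF w]) (simp add: lincomb_diff_coeffs lincomb_coords powM_zero)
  then show "tuple_map w (x + y) - tuple_map w x - tuple_map w y \<in> powM i"
    unfolding tuple_map_def lincomb_diff_coeffs .
next
  fix a x
  let ?r = "\<lambda>j. coords (a *s x) j - a * coords x j"
  have "lincomb ?r w \<in> powM i"
    by (rule hom_tuplesD[OF w]) (simp add: lincomb_diff_coeffs lincomb_scale_coeffs lincomb_coords powM_zero)
  then show "tuple_map w (a *s x) - a *s tuple_map w x \<in> powM i"
    unfolding tuple_map_def lincomb_diff_coeffs lincomb_scale_coeffs .
qed

lemma hom_tuples_antimono: "i \<le> j \<Longrightarrow> hom_tuples j \<subseteq> hom_tuples i"
proof
  fix w assume "i \<le> j" "w \<in> hom_tuples j"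
  have lin: "linear_mod i (tuple_map w)"
    using linear_mod_antimono[OF linear_mod_tuple_map] \<open>i \<le> j\<close> \<open>w \<in> hom_tuples j\<close> by blast
  show "w \<in> hom_tuples i"
    unfolding hom_tuples_def
  proof safe
    fix r assume "lincomb r e \<in> powM i"
    then have "tuple_map w (lincomb r e) \<in> powM i" by (rule linear_mod_powM[OF lin])
    moreover have "tuple_map w (lincomb r e) - lincomb r w \<in> powM i"
      using tuple_map_lincomb[OF \<open>w \<in> hom_tuples j\<close>] powM_antimono[OF \<open>i \<le> j\<close>] by blast
    ultimately have "tuple_map w (lincomb r e) - (tuple_map w (lincomb r e) - lincomb r w) \<in> powM i"
      by (rule powM_diff)
    then show "lincomb r w \<in> powM i" by simp
  qed
qed

lemma AutM_bij: "g \<in> AutM scale m i \<Longrightarrow> bij_betw g (Mq scale m i) (Mq scale m i)"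
  by (simp add: AutM_def)

lemma AutM_coset:
  assumes "g \<in> AutM scale m i"
  obtains z where "g (coset i x) = coset i z"
proof -
  have "bij_betw g (Mq scale m i) (Mq scale m i)" using assms by (rule AutM_bij)
  then have "g (coset i x) \<in> Mq scale m i" unfolding Mq_def by (rule bij_betw_apply) simp
  then show ?thesis unfolding Mq_def by (rule rangeE) (rule that)
qed

lemma AutM_add:
  assumes "g \<in> AutM scale m i" "g (coset i x) = coset i x'" "g (coset i y) = coset i y'"
  shows "g (coset i (x + y)) = coset i (x' + y')"
proof -
  have "g (coset i (x + y)) = (\<lambda>(u, v). u + v) ` (g (coset i x) \<times> g (coset i y))"
    using assms(1) by (simp add: AutM_def)
  also have "\<dots> = coset i (x' + y')" by (simp add: assms(2,3) coset_add)
  finally show ?thesis .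
qed

lemma AutM_scale:
  assumes "g \<in> AutM scale m i" "g (coset i x) = coset i z"
  shows "g (coset i (a *s x)) = coset i (a *s z)"
  using assms by (simp add: AutM_def)

lemma AutM_zero:
  assumes "g \<in> AutM scale m i"
  shows "g (coset i 0) = coset i 0"
  using AutM_coset[OF assms] AutM_scale[OF assms, of 0 _ 0] by (metis scale_zero_left)

lemma AutM_lincomb:
  assumes g: "g \<in> AutM scale m i" and w: "\<forall>j<k. g (coset i (e j)) = coset i (w j)"
  shows "g (coset i (lincomb r e)) = coset i (lincomb r w)"
proof -
  have "J \<subseteq> {..<k} \<Longrightarrow> g (coset i (\<Sum>j\<in>J. r j *s e j)) = coset i (\<Sum>j\<in>J. r j *s w j)"
    if "finite J" for J
    using that
  proof (induction J rule: finite_induct)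
    case empty then show ?case using AutM_zero[OF g] by simp
  next
    case (insert j J)
    then show ?case using AutM_add[OF g AutM_scale[OF g]] w by simp
  qed
  then show ?thesis unfolding lincomb_def by simp
qed

lemma hom_tuples_AutM:
  assumes g: "g \<in> AutM scale m i" and w: "\<forall>j<k. g (coset i (e j)) = coset i (w j)"
  shows "w \<in> hom_tuples i"
  unfolding hom_tuples_def
proof safe
  fix r assume "lincomb r e \<in> powM i"
  then have "coset i (lincomb r e) = coset i 0" by (simp add: coset_eq_iff)
  then have "coset i (lincomb r w) = coset i 0" using AutM_lincomb[OF g w, of r] AutM_zero[OF g] by metis
  then show "lincomb r w \<in> powM i" by (simp add: coset_eq_iff)
qed

definition induced_aut :: "nat \<Rightarrow> ('b \<Rightarrow> 'b) \<Rightarrow> 'b set \<Rightarrow> 'b set" where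
  "induced_aut i \<phi> X = (if X \<in> Mq scale m i then coset i (\<phi> (SOME x. X = coset i x)) else {})"

lemma induced_aut_coset:
  assumes "linear_mod i \<phi>"
  shows "induced_aut i \<phi> (coset i x) = coset i (\<phi> x)"
proof -
  have "coset i x = coset i (SOME x'. coset i x = coset i x')" by (rule someI) (rule refl)
  then have "\<phi> (SOME x'. coset i x = coset i x') - \<phi> x \<in> powM i"
    using linear_mod_cong[OF assms] powM_neg by (fastforce simp: coset_eq_iff)
  moreover have "coset i x \<in> Mq scale m i" unfolding Mq_def by (rule rangeI)
  ultimately show ?thesis unfolding induced_aut_def by (simp add: coset_eq_iff)
qed

lemma bij_betw_induced_aut:
  assumes \<phi>: "linear_mod i \<phi>" and surj: "surj_mod i \<phi>"
  shows "bij_betw (induced_aut i \<phi>) (Mq scale m i) (Mq scale m i)"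
  unfolding bij_betw_def
proof
  show "inj_on (induced_aut i \<phi>) (Mq scale m i)"
  proof (rule inj_onI, unfold Mq_def, clarify)
    fix x y assume "induced_aut i \<phi> (coset i x) = induced_aut i \<phi> (coset i y)"
    then have "(\<phi> (x - y) - (\<phi> x - \<phi> y)) + (\<phi> x - \<phi> y) \<in> powM i"
      by (intro powM_add linear_mod_diff[OF \<phi>]) (simp add: induced_aut_coset[OF \<phi>] coset_eq_iff)
    then have "x - y \<in> powM i" using surj_mod_imp_inj_mod[OF \<phi> surj] by simp
    then show "coset i x = coset i y" by (simp add: coset_eq_iff)
  qed
next
  have "coset i y \<in> induced_aut i \<phi> ` Mq scale m i" for y
  proof -
    obtain x where "\<phi> x - y \<in> powM i" using surj unfolding surj_mod_def by blast
    then have "coset i y = induced_aut i \<phi> (coset i x)"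
      by (simp add: induced_aut_coset[OF \<phi>] coset_eq_iff powM_diff_commute)
    then show ?thesis unfolding Mq_def by blast
  qed
  then show "induced_aut i \<phi> ` Mq scale m i = Mq scale m i"
    unfolding Mq_def by (auto simp: induced_aut_coset[OF \<phi>])
qed

lemma induced_aut_AutM:
  assumes \<phi>: "linear_mod i \<phi>" and surj: "surj_mod i \<phi>"
  shows "induced_aut i \<phi> \<in> AutM scale m i"
  unfolding AutM_def
proof (intro CollectI conjI allI impI bij_betw_induced_aut[OF assms])
  fix X assume "X \<notin> Mq scale m i"
  then show "induced_aut i \<phi> X = {}" unfolding induced_aut_def by simp
next
  fix x y
  have "\<phi> (x + y) - (\<phi> x + \<phi> y) \<in> powM i"
    using linear_mod_add[OF \<phi>] by (simp add: algebra_simps)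
  then show "induced_aut i \<phi> (coset i (x + y))
      = (\<lambda>(u, v). u + v) ` (induced_aut i \<phi> (coset i x) \<times> induced_aut i \<phi> (coset i y))"
    by (simp add: induced_aut_coset[OF \<phi>] coset_add coset_eq_iff)
next
  fix a x z assume "induced_aut i \<phi> (coset i x) = coset i z"
  then have "(\<phi> (a *s x) - a *s \<phi> x) + a *s (\<phi> x - z) \<in> powM i"
    by (intro powM_add powM_scale linear_mod_scale[OF \<phi>])
      (simp add: induced_aut_coset[OF \<phi>] coset_eq_iff)
  then show "induced_aut i \<phi> (coset i (a *s x)) = coset i (a *s z)"
    by (simp add: induced_aut_coset[OF \<phi>] coset_eq_iff algebra_simps)
qed

lemma red_image_iff:
  assumes "1 \<le> n" "n \<le> i"
  shows "h \<in> red_image scale m i n \<longleftrightarrow>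
    h \<in> AutM scale m n \<and> (\<exists>w\<in>hom_tuples i. \<forall>j<k. h (coset n (e j)) = coset n (w j))"
proof
  assume "h \<in> red_image scale m i n"
  then obtain g where h: "h \<in> AutM scale m n" and g: "g \<in> AutM scale m i"
    and red: "\<forall>x y. g (coset i x) = coset i y \<longrightarrow> h (coset n x) = coset n y"
    unfolding red_image_def by blast
  define w where "w j = (SOME z. g (coset i (e j)) = coset i z)" for j
  have "g (coset i (e j)) = coset i (w j)" for j
    unfolding w_def by (rule someI_ex) (metis AutM_coset[OF g])
  then show "h \<in> AutM scale m n \<and> (\<exists>w\<in>hom_tuples i. \<forall>j<k. h (coset n (e j)) = coset n (w j))"
    using h red hom_tuples_AutM[OF g] by blast
next
  assume "h \<in> AutM scale m n \<and> (\<exists>w\<in>hom_tuples i. \<forall>j<k. h (coset n (e j)) = coset n (w j))"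
  then obtain w where h: "h \<in> AutM scale m n" and w: "w \<in> hom_tuples i"
    and hw: "\<forall>j<k. h (coset n (e j)) = coset n (w j)" by blast
  have \<phi>: "linear_mod i (tuple_map w)" by (rule linear_mod_tuple_map[OF w])
  have h_\<phi>: "h (coset n x) = coset n (tuple_map w x)" for x
    using AutM_lincomb[OF h hw, of "coords x"] unfolding tuple_map_def lincomb_coords .
  have "surj_mod 1 (tuple_map w)"
    unfolding surj_mod_def
  proof
    fix y
    have "coset n y \<in> h ` Mq scale m n" using AutM_bij[OF h] unfolding bij_betw_def Mq_def by simp
    then obtain x where "h (coset n x) = coset n y" unfolding Mq_def by blast
    then have "tuple_map w x - y \<in> powM n" by (simp add: h_\<phi> coset_eq_iff)
    then show "\<exists>x. tuple_map w x - y \<in> powM 1" using powM_antimono[OF assms(1)] by blast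
  qed
  then have "induced_aut i (tuple_map w) \<in> AutM scale m i"
    by (rule induced_aut_AutM[OF \<phi> surj_mod_from_one[OF \<phi>]])
  moreover have "h (coset n x) = coset n y" if "induced_aut i (tuple_map w) (coset i x) = coset i y" for x y
    using that powM_antimono[OF assms(2)] by (auto simp: induced_aut_coset[OF \<phi>] h_\<phi> coset_eq_iff)
  ultimately show "h \<in> red_image scale m i n" unfolding red_image_def using h by blast
qed

section \<open>Stabilisation of the images\<close>

sublocale tuples: module "\<lambda>a (v :: nat \<Rightarrow> 'b) j. a *s v j"
  by unfold_locales (auto simp: fun_eq_iff scale_right_distrib scale_left_distrib)

definition finite_tuples :: "(nat \<Rightarrow> 'b) set" where
  "finite_tuples = {v. \<forall>j\<ge>k. v j = 0}"

definition unit_tuples :: "(nat \<Rightarrow> 'b) set" where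
  "unit_tuples = {0(j := e l) | j l. j < k \<and> l < k}"

lemma finite_unit_tuples: "finite unit_tuples"
proof -
  have "unit_tuples = (\<lambda>(j, l). 0(j := e l)) ` ({..<k} \<times> {..<k})"
    unfolding unit_tuples_def by auto
  then show ?thesis by simp
qed

lemma tuples_subspace_finite_tuples: "tuples.subspace finite_tuples"
  unfolding finite_tuples_def by (rule tuples.subspaceI) auto

lemma single_tuple_in_span: "j < k \<Longrightarrow> 0(j := y) \<in> tuples.span unit_tuples"
proof -
  assume j: "j < k"
  have "subspace {y. 0(j := y) \<in> tuples.span unit_tuples}"
  proof (rule subspaceI)
    have "0(j := 0) = (0 :: nat \<Rightarrow> 'b)" by (auto simp: fun_eq_iff)
    then show "0 \<in> {y. 0(j := y) \<in> tuples.span unit_tuples}" using tuples.span_zero by simp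
  next
    fix x y assume "x \<in> {y. 0(j := y) \<in> tuples.span unit_tuples}" "y \<in> {y. 0(j := y) \<in> tuples.span unit_tuples}"
    moreover have "0(j := x + y) = 0(j := x) + 0(j := y)" by (auto simp: fun_eq_iff)
    ultimately show "x + y \<in> {y. 0(j := y) \<in> tuples.span unit_tuples}" by (simp add: tuples.span_add)
  next
    fix c x assume "x \<in> {y. 0(j := y) \<in> tuples.span unit_tuples}"
    moreover have "0(j := c *s x) = (\<lambda>l. c *s (0(j := x)) l)" by (auto simp: fun_eq_iff)
    ultimately show "c *s x \<in> {y. 0(j := y) \<in> tuples.span unit_tuples}"
      using tuples.span_scale[of "0(j := x)" unit_tuples c] by simp
  qed
  moreover have "e ` {..<k} \<subseteq> {y. 0(j := y) \<in> tuples.span unit_tuples}"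
    using j unfolding unit_tuples_def by (auto intro: tuples.span_base)
  ultimately show ?thesis using span_minimal span_generators by blast
qed

lemma tuples_span_unit_tuples: "tuples.span unit_tuples = finite_tuples"
proof
  show "tuples.span unit_tuples \<subseteq> finite_tuples"
    by (rule tuples.span_minimal[OF _ tuples_subspace_finite_tuples])
      (auto simp: unit_tuples_def finite_tuples_def)
next
  show "finite_tuples \<subseteq> tuples.span unit_tuples"
  proof
    fix v assume v: "v \<in> finite_tuples"
    have "v = (\<Sum>j<k. 0(j := v j))"
    proof
      fix l
      have "(\<Sum>j<k. 0(j := v j)) l = (\<Sum>j<k. (0(j := v j)) l)" by (rule sum_fun_apply)
      also have "\<dots> = v l" using v unfolding finite_tuples_def by (auto simp: sum.delta' zero_fun_def)
      finally show "v l = (\<Sum>j<k. 0(j := v j)) l" by simp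
    qed
    also have "\<dots> \<in> tuples.span unit_tuples" by (intro tuples.span_sum single_tuple_in_span) simp
    finally show "v \<in> tuples.span unit_tuples" .
  qed
qed

text \<open>\<open>reduced_tuples n i\<close> is the image of \<open>hom_tuples i\<close> in \<open>(M / m\<^sup>n M)\<^sup>k\<close>, lifted back to
  \<open>M\<^sup>k\<close>; by \<open>red_image_iff\<close> it determines the image of \<open>G\<^sub>i\<close> in \<open>G\<^sub>n\<close>.\<close>

definition reduced_tuples :: "nat \<Rightarrow> nat \<Rightarrow> (nat \<Rightarrow> 'b) set" where
  "reduced_tuples n i = {v \<in> finite_tuples. \<exists>w\<in>hom_tuples i. \<forall>j<k. v j - w j \<in> powM n}"

lemma tuples_subspace_reduced_tuples: "tuples.subspace (reduced_tuples n i)"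
proof (rule tuples.subspaceI)
  show "0 \<in> reduced_tuples n i"
    unfolding reduced_tuples_def finite_tuples_def
    by (auto simp: zero_fun_def powM_zero intro!: bexI[OF _ hom_tuples_zero])
next
  fix v v' assume "v \<in> reduced_tuples n i" "v' \<in> reduced_tuples n i"
  then obtain w w' where fin: "v \<in> finite_tuples" "v' \<in> finite_tuples"
    and w: "w \<in> hom_tuples i" "w' \<in> hom_tuples i"
    and d: "\<forall>j<k. v j - w j \<in> powM n" "\<forall>j<k. v' j - w' j \<in> powM n"
    unfolding reduced_tuples_def by blast
  have "(v j + v' j) - (w j + w' j) \<in> powM n" if "j < k" for j
    using powM_add[of "v j - w j" n "v' j - w' j"] d that by (simp add: algebra_simps)
  then show "v + v' \<in> reduced_tuples n i"
    using fin unfolding reduced_tuples_def finite_tuples_def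
    by (auto intro!: bexI[OF _ hom_tuples_add[OF w]])
next
  fix c v assume "v \<in> reduced_tuples n i"
  then obtain w where fin: "v \<in> finite_tuples" and w: "w \<in> hom_tuples i"
    and d: "\<forall>j<k. v j - w j \<in> powM n"
    unfolding reduced_tuples_def by blast
  have "c *s v j - c *s w j \<in> powM n" if "j < k" for j
    using powM_scale[of "v j - w j" n c] d that by (simp add: scale_right_diff_distrib)
  then show "(\<lambda>j. c *s v j) \<in> reduced_tuples n i"
    using fin unfolding reduced_tuples_def finite_tuples_def
    by (auto intro!: bexI[OF _ hom_tuples_scale[OF w]])
qed

lemma reduced_tuples_antimono: "antimono (reduced_tuples n)"
  unfolding antimono_def reduced_tuples_def using hom_tuples_antimono by blast

lemma reduced_tuples_lower_bound: "tuples.ideal_span (ideal_pow m n) finite_tuples \<subseteq> reduced_tuples n i"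
proof -
  have "tuples.subspace {v \<in> finite_tuples. \<forall>j. v j \<in> powM n}"
    using tuples_subspace_finite_tuples
    by (auto simp: tuples.subspace_def powM_zero powM_add powM_scale)
  moreover have "{(\<lambda>j. a *s v j) | a v. a \<in> ideal_pow m n \<and> v \<in> finite_tuples}
      \<subseteq> {v \<in> finite_tuples. \<forall>j. v j \<in> powM n}"
    using scale_mem_powM unfolding finite_tuples_def by auto
  moreover have "{v \<in> finite_tuples. \<forall>j. v j \<in> powM n} \<subseteq> reduced_tuples n i"
    unfolding reduced_tuples_def by (auto intro!: bexI[OF _ hom_tuples_zero])
  ultimately show ?thesis
    unfolding tuples.ideal_span_def by (metis (no_types, lifting) order.trans tuples.span_minimal)
qed

lemma eventually_const_reduced_tuples: "eventually_const (reduced_tuples n)"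
proof (rule tuples.eventually_const_chain_above_ideal_power[OF maximal noetherian finite_unit_tuples])
  show "mono (reduced_tuples n) \<or> antimono (reduced_tuples n)" using reduced_tuples_antimono by blast
  show "tuples.subspace (reduced_tuples n i)" for i by (rule tuples_subspace_reduced_tuples)
  show "tuples.ideal_span (ideal_pow m n) (tuples.span unit_tuples) \<subseteq> reduced_tuples n i" for i
    unfolding tuples_span_unit_tuples by (rule reduced_tuples_lower_bound)
  show "reduced_tuples n i \<subseteq> tuples.span unit_tuples" for i
    unfolding tuples_span_unit_tuples reduced_tuples_def by blast
qed

lemma red_image_iff_reduced_tuples:
  assumes "1 \<le> n" "n \<le> i"
  shows "h \<in> red_image scale m i n \<longleftrightarrow>
    h \<in> AutM scale m n \<and> (\<exists>v\<in>reduced_tuples n i. \<forall>j<k. h (coset n (e j)) = coset n (v j))"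
  unfolding red_image_iff[OF assms]
proof (intro conj_cong refl iffI)
  assume "\<exists>w\<in>hom_tuples i. \<forall>j<k. h (coset n (e j)) = coset n (w j)"
  then obtain w where "w \<in> hom_tuples i" "\<forall>j<k. h (coset n (e j)) = coset n (w j)" by blast
  moreover have "(\<lambda>j. if j < k then w j else 0) \<in> reduced_tuples n i"
    unfolding reduced_tuples_def finite_tuples_def using \<open>w \<in> hom_tuples i\<close>
    by (auto simp: powM_zero intro!: bexI[of _ w])
  ultimately show "\<exists>v\<in>reduced_tuples n i. \<forall>j<k. h (coset n (e j)) = coset n (v j)"
    by (intro bexI[of _ "\<lambda>j. if j < k then w j else 0"]) simp_all
next
  assume "\<exists>v\<in>reduced_tuples n i. \<forall>j<k. h (coset n (e j)) = coset n (v j)"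
  then obtain v w where "w \<in> hom_tuples i" "\<forall>j<k. v j - w j \<in> powM n"
    "\<forall>j<k. h (coset n (e j)) = coset n (v j)"
    unfolding reduced_tuples_def by blast
  then show "\<exists>w\<in>hom_tuples i. \<forall>j<k. h (coset n (e j)) = coset n (w j)"
    by (auto simp: coset_eq_iff)
qed

lemma red_image_eventually_const:
  assumes "1 \<le> n"
  shows "\<exists>N\<ge>n. \<forall>i j. N \<le> i \<and> N \<le> j \<longrightarrow> red_image scale m i n = red_image scale m j n"
proof -
  obtain N where N: "\<forall>t\<ge>N. reduced_tuples n t = reduced_tuples n N"
    using eventually_const_reduced_tuples unfolding eventually_const_def by blast
  have "red_image scale m i n = red_image scale m j n" if "max n N \<le> i" "max n N \<le> j" for i j
  proof (rule set_eqI)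
    fix h
    have "reduced_tuples n i = reduced_tuples n j" using N that by (metis max.boundedE)
    then show "h \<in> red_image scale m i n \<longleftrightarrow> h \<in> red_image scale m j n"
      using that red_image_iff_reduced_tuples[OF assms, of i h] red_image_iff_reduced_tuples[OF assms, of j h]
      by simp
  qed
  then show ?thesis by (intro exI[of _ "max n N"]) auto
qed

end

theorem mainTheorem16:
  fixes m :: "'a::comm_ring_1 set"
    and s :: "'a \<Rightarrow> 'b::ab_group_add \<Rightarrow> 'b"
  assumes "noetherian_ring TYPE('a)"
    and "local_ring_with m"
    and "adically_complete m"
    and "module s"
    and "fin_gen_module s"
  shows "\<forall>n\<ge>1. \<exists>N\<ge>n. \<forall>i j. N \<le> i \<and> N \<le> j \<longrightarrow> red_image s m i n = red_image s m j n"
proof -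
  obtain F where F: "finite F" "submod_gen s F = UNIV"
    using assms(5) unfolding fin_gen_module_def by blast
  then obtain k :: nat and e where "F = e ` {..<k}"
    unfolding finite_conv_nat_seg_image lessThan_def by blast
  moreover have "submod_gen s F = module.span s F"
    unfolding submod_gen_def module.span_explicit[OF assms(4)] by simp
  ultimately have "module.span s (e ` {..<k}) = UNIV" using F(2) by simp
  moreover have "maximal_ideal m" using assms(2) unfolding local_ring_with_def by simp
  ultimately have "noetherian_fg_module s m k e"
    using assms(1,4) unfolding noetherian_fg_module_def noetherian_fg_module_axioms_def by blast
  then interpret noetherian_fg_module s m k e .
  show ?thesis using red_image_eventually_const by blast
qed

end
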